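(* Let $\mu$ satisfy Assumption A (see context), let $E$ be an atom of $\mu$, and let $(z_n)_{n\ge1}\subset\mathbb{C}^+$ be a sequence converging non-tangentially to $E$. Then $$\lim_{n}I_{\widehat\mu}(z_n)=\lim_n\frac{\int\frac{1}{|x-z_n|^2}\mu(dx)}{\big|\int\frac{1}{x-z_n}\mu(dx)\big|^2}-1=\frac{1}{\mu(\{E\})}-1.$$
   Context: Assumption A: $n_{\mathrm{ac}},n_{\mathrm{pp}},n^{\mathrm{out}}_{\mathrm{pp}}\ge1$ integers; $\mu$ is a compactly supported Borel probability measure on $\mathbb{R}$ whose singular part is supported on a finite set $\{x_1,\dots,x_{n_{\mathrm{pp}}}\}$, whose absolutely continuous part $\mu_{\mathrm{ac}}$ is supported on $n_{\mathrm{ac}}$ intervals $[E_j^-,E_j^+]$, with exactly $n^{\mathrm{out}}_{\mathrm{pp}}$ atoms outside $\mathrm{supp}(\mu_{\mathrm{ac}})$, no atom at the endpoints $E_j^\pm$, and density $\rho$ with $C_j^{-1}<\rho(x)/\big((x-E_j^-)^{t_j^-}(E_j^+-x)^{t_j^+}\big)<C_j$ a.e. on $[E_j^-,E_j^+]$ for some $-1<t_j^\pm<1$, $C_j\ge1$. $F_\mu=-1/m_\mu$ with $m_\mu(z)=\int\frac{1}{x-z}\mu(dx)$; $\widehat\mu$ is the finite Borel measure with $F_\mu(\omega)-\omega=-\int x\mu(dx)+\int\frac{1}{x-\omega}\widehat\mu(dx)$, $\omega\in\mathbb{C}^+$; $I_\nu(\omega)=\int\frac{1}{|x-\omega|^2}\nu(dx)$.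 A sequence $z_n\in\mathbb{C}^+$ converging to $E\in\mathbb{R}$ converges non-tangentially if $|(\mathrm{Re}\,z_n-E)/\mathrm{Im}\,z_n|\le C$ for some $C>0$ and all large $n$. *)

theory Defs
  imports "HOL-Probability.Probability"
begin

definition stieltjes :: "real measure \<Rightarrow> complex \<Rightarrow> complex" where
  "stieltjes \<mu> z = (\<integral>x. 1 / (complex_of_real x - z) \<partial>\<mu>)"

definition Ftrans :: "real measure \<Rightarrow> complex \<Rightarrow> complex" where
  "Ftrans \<mu> z = - 1 / stieltjes \<mu> z"

definition Ifun :: "real measure \<Rightarrow> complex \<Rightarrow> real" where
  "Ifun \<nu> w = (\<integral>x. 1 / (cmod (complex_of_real x - w))\<^sup>2 \<partial>\<nu>)"

definition is_hat_measure :: "real measure \<Rightarrow> real measure \<Rightarrow> bool" where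
  "is_hat_measure \<mu> \<nu> \<longleftrightarrow> sets \<nu> = sets borel \<and> finite_measure \<nu> \<and>
     (\<forall>w. Im w > 0 \<longrightarrow>
        Ftrans \<mu> w - w = - complex_of_real (\<integral>x. x \<partial>\<mu>)
                           + (\<integral>x. 1 / (complex_of_real x - w) \<partial>\<nu>))"

definition nontangential_conv :: "(nat \<Rightarrow> complex) \<Rightarrow> real \<Rightarrow> bool" where
  "nontangential_conv z E \<longleftrightarrow> (\<forall>n. Im (z n) > 0) \<and> z \<longlonglongrightarrow> complex_of_real E \<and>
     (\<exists>C>0. \<forall>\<^sub>F n in sequentially. \<bar>(Re (z n) - E) / Im (z n)\<bar> \<le> C)"

definition assumptionA ::
  "real measure \<Rightarrow> nat \<Rightarrow> nat \<Rightarrow> nat \<Rightarrow> (nat \<Rightarrow> real) \<Rightarrow> (nat \<Rightarrow> real) \<Rightarrow>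
   (nat \<Rightarrow> real) \<Rightarrow> (nat \<Rightarrow> real) \<Rightarrow> (real \<Rightarrow> real) \<Rightarrow>
   (nat \<Rightarrow> real) \<Rightarrow> (nat \<Rightarrow> real) \<Rightarrow> (nat \<Rightarrow> real) \<Rightarrow> bool" where
  "assumptionA \<mu> nac npp nout xs ws Em Ep \<rho> tm tp C \<longleftrightarrow>
     nac \<ge> 1 \<and> npp \<ge> 1 \<and> nout \<ge> 1 \<and>
     prob_space \<mu> \<and> sets \<mu> = sets borel \<and>
     \<comment> \<open>the a.c. support: nac disjoint compact intervals\<close>
     (\<forall>j<nac. Em j < Ep j) \<and> (\<forall>j. Suc j < nac \<longrightarrow> Ep j < Em (Suc j)) \<and>
     \<comment> \<open>the atoms: npp distinct points with positive mass\<close>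
     inj_on xs {..<npp} \<and> (\<forall>j<npp. ws j > 0) \<and>
     \<comment> \<open>the density\<close>
     \<rho> \<in> borel_measurable borel \<and> (\<forall>x. \<rho> x \<ge> 0) \<and>
     (\<forall>x. x \<notin> (\<Union>j<nac. {Em j..Ep j}) \<longrightarrow> \<rho> x = 0) \<and>
     (\<forall>A\<in>sets borel. emeasure \<mu> A =
        (\<integral>\<^sup>+x\<in>A. ennreal (\<rho> x) \<partial>lborel) + (\<Sum>j<npp. ennreal (ws j) * indicator A (xs j))) \<and>
     \<comment> \<open>exactly nout atoms outside supp(mu_ac), none at the endpoints\<close>
     card {j\<in>{..<npp}. xs j \<notin> (\<Union>k<nac. {Em k..Ep k})} = nout \<and>
     (\<forall>j<npp. \<forall>k<nac. xs j \<noteq> Em k \<and> xs j \<noteq> Ep k) \<and>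
     \<comment> \<open>power-law behaviour of the density near the edges\<close>
     (\<forall>j<nac. -1 < tm j \<and> tm j < 1 \<and> -1 < tp j \<and> tp j < 1 \<and> C j \<ge> 1 \<and>
        (AE x in lborel. x \<in> {Em j..Ep j} \<longrightarrow>
           inverse (C j) < \<rho> x / ((x - Em j) powr tm j * (Ep j - x) powr tp j) \<and>
           \<rho> x / ((x - Em j) powr tm j * (Ep j - x) powr tp j) < C j))"

end

theory Submission
  imports Defs
begin

text \<open>
  Taking imaginary parts in the defining identity of \<open>\<nu>\<close> and using
  \<open>Im F = Im m / |m|\<^sup>2\<close>, \<open>Im m(w) = Im w \<cdot> I\<^sub>\<mu>(w)\<close> gives
  \<open>I\<^sub>\<nu> = I\<^sub>\<mu> / |m|\<^sup>2 - 1\<close> on the upper half plane.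
  Near an atom \<open>E\<close>, both \<open>(E - z) m(z)\<close> and \<open>|E - z|\<^sup>2 I\<^sub>\<mu>(z)\<close> are integrals of the
  kernel \<open>(E - z)/(x - z)\<close> resp. its squared modulus, which converges pointwise to
  the indicator of \<open>{E}\<close>; non-tangential approach keeps the kernel bounded, so by
  dominated convergence both tend to \<open>\<mu>({E})\<close>, and the quotient tends to \<open>1/\<mu>({E})\<close>.
\<close>

lemma integral_dominated_convergence_eventually:
  fixes f :: "'a \<Rightarrow> 'b::{banach, second_countable_topology}" and w :: "'a \<Rightarrow> real"
  assumes "f \<in> borel_measurable M" "\<And>i. s i \<in> borel_measurable M" "integrable M w"
    and "AE x in M. (\<lambda>i. s i x) \<longlonglongrightarrow> f x"
    and "\<forall>\<^sub>F i in sequentially. AE x in M. norm (s i x) \<le> w x"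
  shows "(\<lambda>i. integral\<^sup>L M (s i)) \<longlonglongrightarrow> integral\<^sup>L M f"
proof -
  obtain N where N: "\<And>i. i \<ge> N \<Longrightarrow> AE x in M. norm (s i x) \<le> w x"
    using assms(5) by (auto simp: eventually_sequentially)
  show ?thesis
  proof (rule LIMSEQ_offset[where k = N], rule integral_dominated_convergence)
    show "AE x in M. (\<lambda>i. s (i + N) x) \<longlonglongrightarrow> f x"
      using assms(4) by eventually_elim (rule LIMSEQ_ignore_initial_segment)
    show "AE x in M. norm (s (i + N) x) \<le> w x" for i
      by (rule N) simp
  qed (use assms in auto)
qed

lemma Im_le_cmod_real_minus: "\<bar>Im w\<bar> \<le> cmod (complex_of_real x - w)"
  using abs_Im_le_cmod[of "complex_of_real x - w"] by simp

lemma integrable_Cauchy_kernel: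
  fixes M :: "real measure"
  assumes "finite_measure M" "sets M = sets borel" "Im w \<noteq> 0"
  shows "integrable M (\<lambda>x. 1 / (complex_of_real x - w))"
proof (rule finite_measure.integrable_const_bound[OF assms(1), where B = "1 / \<bar>Im w\<bar>"])
  show "AE x in M. norm (1 / (complex_of_real x - w)) \<le> 1 / \<bar>Im w\<bar>"
    using Im_le_cmod_real_minus assms(3) by (auto simp: norm_divide intro!: frac_le)
  show "(\<lambda>x. 1 / (complex_of_real x - w)) \<in> borel_measurable M"
    unfolding measurable_cong_sets[OF assms(2) refl] by measurable
qed

lemma Im_stieltjes:
  assumes "finite_measure M" "sets M = sets borel" "Im w \<noteq> 0"
  shows "Im (stieltjes M w) = Im w * Ifun M w"
proof -
  have "Im (stieltjes M w) = (\<integral>x. Im (1 / (complex_of_real x - w)) \<partial>M)"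
    unfolding stieltjes_def using integrable_Cauchy_kernel[OF assms] by simp
  also have "\<dots> = (\<integral>x. Im w * (1 / (cmod (complex_of_real x - w))\<^sup>2) \<partial>M)"
    by (simp add: Im_divide cmod_power2)
  also have "\<dots> = Im w * Ifun M w"
    unfolding Ifun_def by (rule integral_mult_right_zero)
  finally show ?thesis .
qed

lemma Ifun_hat_measure:
  assumes "finite_measure \<mu>" "sets \<mu> = sets borel" "is_hat_measure \<mu> \<nu>" "Im w > 0"
  shows "Ifun \<nu> w = Ifun \<mu> w / (cmod (stieltjes \<mu> w))\<^sup>2 - 1"
proof -
  have \<nu>: "sets \<nu> = sets borel" "finite_measure \<nu>"
    and F: "Ftrans \<mu> w - w = - complex_of_real (\<integral>x. x \<partial>\<mu>) + stieltjes \<nu> w"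
    using assms(3,4) unfolding is_hat_measure_def stieltjes_def by auto
  have "Im w * Ifun \<nu> w = Im (Ftrans \<mu> w) - Im w"
    using arg_cong[OF F, of Im] Im_stieltjes[OF \<nu>(2,1)] assms(4) by simp
  also have "\<dots> = Im (stieltjes \<mu> w) / (cmod (stieltjes \<mu> w))\<^sup>2 - Im w"
    unfolding Ftrans_def by (simp add: Im_divide cmod_power2)
  also have "\<dots> = Im w * (Ifun \<mu> w / (cmod (stieltjes \<mu> w))\<^sup>2 - 1)"
    using Im_stieltjes[OF assms(1,2)] assms(4)
    by (simp add: algebra_simps)
  finally show ?thesis
    using assms(4) by simp
qed

lemma nontangential_convD:
  assumes "nontangential_conv z E"
  shows "Im (z n) > 0" and "z \<longlonglongrightarrow> complex_of_real E"
  using assms unfolding nontangential_conv_def by auto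

lemma nontangential_conv_kernel_bound:
  assumes "nontangential_conv z E"
  obtains K where "\<forall>\<^sub>F n in sequentially. \<forall>x.
    cmod ((complex_of_real E - z n) / (complex_of_real x - z n)) \<le> K"
proof -
  obtain C where "C > 0" and ratio: "\<forall>\<^sub>F n in sequentially. \<bar>(Re (z n) - E) / Im (z n)\<bar> \<le> C"
    and pos: "\<And>n. Im (z n) > 0"
    using assms unfolding nontangential_conv_def by auto
  from ratio have "\<forall>\<^sub>F n in sequentially. \<forall>x.
    cmod ((complex_of_real E - z n) / (complex_of_real x - z n)) \<le> C + 1"
  proof (eventually_elim, intro allI)
    fix n x
    assume "\<bar>(Re (z n) - E) / Im (z n)\<bar> \<le> C"
    then have "\<bar>Re (z n) - E\<bar> \<le> C * Im (z n)"
      using pos[of n] by (simp add: abs_divide pos_divide_le_eq)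
    then have "cmod (complex_of_real E - z n) \<le> (C + 1) * Im (z n)"
      using cmod_le[of "complex_of_real E - z n"] pos[of n] by (simp add: algebra_simps)
    also have "\<dots> \<le> (C + 1) * cmod (complex_of_real x - z n)"
      using Im_le_cmod_real_minus[of "z n" x] pos[of n] \<open>C > 0\<close> by (simp add: mult_left_mono)
    finally have "cmod (complex_of_real E - z n) \<le> (C + 1) * cmod (complex_of_real x - z n)" .
    moreover have "cmod (complex_of_real x - z n) > 0"
      using Im_le_cmod_real_minus[of "z n" x] pos[of n] by linarith
    ultimately show "cmod ((complex_of_real E - z n) / (complex_of_real x - z n)) \<le> C + 1"
      by (simp add: norm_divide pos_divide_le_eq)
  qed
  then show ?thesis by (rule that)
qed

lemma tendsto_atom_kernel:
  assumes "\<And>n. Im (z n) \<noteq> 0" "z \<longlonglongrightarrow> complex_of_real E"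
  shows "(\<lambda>n. (complex_of_real E - z n) / (complex_of_real x - z n))
           \<longlonglongrightarrow> complex_of_real (indicator {E} x)"
proof (cases "x = E")
  case True
  have "complex_of_real E - z n \<noteq> 0" for n
    using assms(1)[of n] by (auto simp: complex_eq_iff)
  then show ?thesis using True by simp
next
  case False
  have "(\<lambda>n. (complex_of_real E - z n) / (complex_of_real x - z n))
          \<longlonglongrightarrow> (complex_of_real E - complex_of_real E) / (complex_of_real x - complex_of_real E)"
    using False by (intro tendsto_intros assms(2)) auto
  then show ?thesis using False by simp
qed

lemma tendsto_scaled_stieltjes_atom:
  assumes "finite_measure M" "sets M = sets borel" "nontangential_conv z E"
  shows "(\<lambda>n. (complex_of_real E - z n) * stieltjes M (z n))
           \<longlonglongrightarrow> complex_of_real (measure M {E})"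
proof -
  interpret finite_measure M by fact
  have meas: "borel_measurable M = borel_measurable borel"
    by (rule measurable_cong_sets[OF assms(2) refl])
  obtain K where K: "\<forall>\<^sub>F n in sequentially. \<forall>x.
      cmod ((complex_of_real E - z n) / (complex_of_real x - z n)) \<le> K"
    using nontangential_conv_kernel_bound[OF assms(3)] by blast
  have "(\<lambda>n. \<integral>x. (complex_of_real E - z n) / (complex_of_real x - z n) \<partial>M)
          \<longlonglongrightarrow> (\<integral>x. complex_of_real (indicator {E} x) \<partial>M)"
  proof (rule integral_dominated_convergence_eventually[where w = "\<lambda>_. K"])
    show "AE x in M. (\<lambda>n. (complex_of_real E - z n) / (complex_of_real x - z n))
            \<longlonglongrightarrow> complex_of_real (indicator {E} x)"
      using nontangential_convD[OF assms(3)] by (intro AE_I2 tendsto_atom_kernel) (metis less_irrefl)+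
    show "\<forall>\<^sub>F n in sequentially.
            AE x in M. norm ((complex_of_real E - z n) / (complex_of_real x - z n)) \<le> K"
      using K by eventually_elim simp
  qed (auto simp: meas)
  then show ?thesis
    using sets_eq_imp_space_eq[OF assms(2)]
    by (simp add: stieltjes_def integral_mult_right_zero[symmetric])
qed

lemma tendsto_scaled_Ifun_atom:
  assumes "finite_measure M" "sets M = sets borel" "nontangential_conv z E"
  shows "(\<lambda>n. (cmod (complex_of_real E - z n))\<^sup>2 * Ifun M (z n)) \<longlonglongrightarrow> measure M {E}"
proof -
  interpret finite_measure M by fact
  have meas: "borel_measurable M = borel_measurable borel"
    by (rule measurable_cong_sets[OF assms(2) refl])
  obtain K where K: "\<forall>\<^sub>F n in sequentially. \<forall>x.
      cmod ((complex_of_real E - z n) / (complex_of_real x - z n)) \<le> K"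
    using nontangential_conv_kernel_bound[OF assms(3)] by blast
  have "(\<lambda>n. \<integral>x. (cmod ((complex_of_real E - z n) / (complex_of_real x - z n)))\<^sup>2 \<partial>M)
          \<longlonglongrightarrow> (\<integral>x. indicator {E} x \<partial>M)"
  proof (rule integral_dominated_convergence_eventually[where w = "\<lambda>_. K\<^sup>2"])
    show "AE x in M. (\<lambda>n. (cmod ((complex_of_real E - z n) / (complex_of_real x - z n)))\<^sup>2)
            \<longlonglongrightarrow> indicator {E} x"
    proof (rule AE_I2)
      fix x
      have kernel: "(\<lambda>n. (complex_of_real E - z n) / (complex_of_real x - z n))
              \<longlonglongrightarrow> complex_of_real (indicator {E} x)"
        using nontangential_convD[OF assms(3)] by (intro tendsto_atom_kernel) (metis less_irrefl)
      have "(cmod (complex_of_real (indicator {E} x)))\<^sup>2 = indicator {E} x"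
        by (simp add: indicator_def)
      with tendsto_power[OF tendsto_norm[OF kernel], of 2]
      show "(\<lambda>n. (cmod ((complex_of_real E - z n) / (complex_of_real x - z n)))\<^sup>2)
              \<longlonglongrightarrow> indicator {E} x"
        by simp
    qed
    show "\<forall>\<^sub>F n in sequentially.
            AE x in M. norm ((cmod ((complex_of_real E - z n) / (complex_of_real x - z n)))\<^sup>2) \<le> K\<^sup>2"
      using K by eventually_elim (simp add: power_mono)
  qed (auto simp: meas)
  then show ?thesis
    using sets_eq_imp_space_eq[OF assms(2)]
    by (simp add: Ifun_def integral_mult_right_zero[symmetric] norm_divide power_divide)
qed

lemma tendsto_Ifun_over_stieltjes_atom:
  assumes "finite_measure M" "sets M = sets borel" "nontangential_conv z E" "measure M {E} > 0"
  shows "(\<lambda>n. Ifun M (z n) / (cmod (stieltjes M (z n)))\<^sup>2) \<longlonglongrightarrow> 1 / measure M {E}"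
proof -
  let ?d = "\<lambda>n. complex_of_real E - z n"
  have "?d n \<noteq> 0" for n
    using nontangential_convD(1)[OF assms(3), of n] by (auto simp: complex_eq_iff)
  then have rescale: "Ifun M (z n) / (cmod (stieltjes M (z n)))\<^sup>2
      = (cmod (?d n))\<^sup>2 * Ifun M (z n) / (cmod (?d n * stieltjes M (z n)))\<^sup>2" for n
    by (simp add: norm_mult power_mult_distrib)
  have "(\<lambda>n. (cmod (?d n))\<^sup>2 * Ifun M (z n) / (cmod (?d n * stieltjes M (z n)))\<^sup>2)
          \<longlonglongrightarrow> measure M {E} / (cmod (complex_of_real (measure M {E})))\<^sup>2"
    using assms(4)
    by (intro tendsto_intros tendsto_scaled_Ifun_atom tendsto_scaled_stieltjes_atom assms(1-3)) simp
  moreover have "measure M {E} / (cmod (complex_of_real (measure M {E})))\<^sup>2 = 1 / measure M {E}"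
    using assms(4) by (simp add: power2_eq_square)
  ultimately show ?thesis
    unfolding rescale by simp
qed

theorem lemma3p11:
  fixes \<mu> \<nu> :: "real measure" and nac npp nout :: nat
    and xs ws Em Ep tm tp C :: "nat \<Rightarrow> real" and \<rho> :: "real \<Rightarrow> real"
    and E :: real and z :: "nat \<Rightarrow> complex"
  assumes "assumptionA \<mu> nac npp nout xs ws Em Ep \<rho> tm tp C"
    and "is_hat_measure \<mu> \<nu>"
    and "measure \<mu> {E} > 0"
    and "nontangential_conv z E"
  shows "((\<lambda>n. Ifun \<nu> (z n)) \<longlonglongrightarrow> 1 / measure \<mu> {E} - 1) \<and>
         ((\<lambda>n. Ifun \<mu> (z n) / (cmod (stieltjes \<mu> (z n)))\<^sup>2 - 1) \<longlonglongrightarrow> 1 / measure \<mu> {E} - 1)"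
proof -
  have F: "finite_measure \<mu>" and S: "sets \<mu> = sets borel"
    using assms(1) unfolding assumptionA_def by (auto intro: prob_space.finite_measure)
  have ratio: "(\<lambda>n. Ifun \<mu> (z n) / (cmod (stieltjes \<mu> (z n)))\<^sup>2 - 1) \<longlonglongrightarrow> 1 / measure \<mu> {E} - 1"
    using tendsto_Ifun_over_stieltjes_atom[OF F S assms(4,3)]
    by (rule tendsto_diff[OF _ tendsto_const])
  have "Ifun \<nu> (z n) = Ifun \<mu> (z n) / (cmod (stieltjes \<mu> (z n)))\<^sup>2 - 1" for n
    using Ifun_hat_measure[OF F S assms(2) nontangential_convD(1)[OF assms(4)]] .
  with ratio show ?thesis
    by simp
qed

end
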